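(* Let $V=\{\mathbf{v}_1,\dots,\mathbf{v}_m\}$ and $\tilde V=\{\tilde{\mathbf{v}}_1,\dots,\tilde{\mathbf{v}}_m\}$ be subsets of $\mathbb{R}^\ell$ whose open convex hulls are given by $\mathrm{Co}(V)=\{\mathbf{x}:A\mathbf{x}\prec\mathbf{b}\}$ and $\mathrm{Co}(\tilde V)=\{\mathbf{x}:\tilde A\mathbf{x}\prec\tilde{\mathbf{b}}\}$, where the rows of $A$ and $\tilde A$ are unit vectors. Let $\varepsilon>0$. If $\mathbf{x}\in\mathbb{R}^\ell$ satisfies $A\mathbf{x}\prec\mathbf{b}-\varepsilon\mathbf{1}$ and $\|\mathbf{v}_i-\tilde{\mathbf{v}}_i\|_2<\varepsilon$ for all $i$, then $\tilde A\mathbf{x}\prec\tilde{\mathbf{b}}$.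
   Context: $\prec$ denotes strict entrywise inequality of vectors and $\mathbf{1}$ the all-ones vector of the appropriate size. $\mathrm{Co}(S)$ denotes the open convex hull (interior of the convex hull) of $S$. *)

theory Defs
  imports "HOL-Analysis.Analysis"
begin

end

theory Submission
  imports Defs
begin

text \<open>Since the rows of \<open>A\<close> are unit vectors, \<open>A x \<prec> b - \<epsilon>\<one>\<close> puts the closed ball
  of radius \<open>\<epsilon>\<close> about \<open>x\<close> inside \<open>Co(V)\<close>. Moving every vertex by less than \<open>\<epsilon>\<close> moves
  each support function \<open>u \<mapsto> max\<^sub>i u \<bullet> v\<^sub>i\<close> (for unit \<open>u\<close>) by less than \<open>\<epsilon>\<close>, so a point
  close to \<open>x\<close> but outside the perturbed hull, separated from it by a unit normal \<open>u\<close>, would push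
  \<open>x + \<epsilon> u\<close> out of the original hull. Hence \<open>x\<close> stays in the interior of
  the perturbed hull, which is \<open>{y. At y \<prec> bt}\<close>; the rows of \<open>At\<close> need not be
  unit vectors for this.\<close>

lemma matrix_vector_mult_component_inner:
  fixes M :: "real ^ 'n ^ 'm"
  shows "(M *v y) $ j = inner (M $ j) y"
  by (simp add: matrix_vector_mult_def inner_vec_def)

lemma cball_subset_strict_polyhedron:
  fixes A :: "real ^ 'n ^ 'm"
  assumes rows: "\<And>j. norm (A $ j) \<le> 1"
    and hx: "\<And>j. (A *v x) $ j < b $ j - \<epsilon>"
  shows "cball x \<epsilon> \<subseteq> {y. \<forall>j. (A *v y) $ j < b $ j}"
proof clarify
  fix y j assume "y \<in> cball x \<epsilon>"
  then have "norm (y - x) \<le> \<epsilon>"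
    by (simp add: dist_norm norm_minus_commute)
  have "inner (A $ j) (y - x) \<le> norm (A $ j) * norm (y - x)"
    by (rule norm_cauchy_schwarz)
  also have "\<dots> \<le> norm (y - x)"
    using rows[of j] by (simp add: mult_left_le_one_le)
  also have "\<dots> \<le> \<epsilon>"
    by fact
  finally show "(A *v y) $ j < b $ j"
    using hx[of j] by (simp add: matrix_vector_mult_component_inner inner_diff_right)
qed

lemma separating_unit_normal_closed_point:
  fixes z :: "'a::euclidean_space"
  assumes "convex S" "closed S" "z \<notin> S"
  obtains u where "norm u = 1" "\<And>y. y \<in> S \<Longrightarrow> inner u y < inner u z"
proof (cases "S = {}")
  case True
  obtain u :: 'a where "u \<in> Basis"
    using nonempty_Basis by blast
  then show ?thesis
    using that[of u] True by (simp add: norm_Basis)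
next
  case False
  obtain a c where ac: "inner a z < c" "\<And>y. y \<in> S \<Longrightarrow> inner a y > c"
    using separating_hyperplane_closed_point[OF assms] by blast
  have "a \<noteq> 0"
    using False ac by fastforce
  show ?thesis
  proof (rule that[of "- a /\<^sub>R norm a"])
    show "norm (- a /\<^sub>R norm a) = 1"
      using \<open>a \<noteq> 0\<close> by simp
    fix y assume "y \<in> S"
    then have "inner a z < inner a y"
      using ac by fastforce
    then show "inner (- a /\<^sub>R norm a) y < inner (- a /\<^sub>R norm a) z"
      using \<open>a \<noteq> 0\<close> by (simp add: divide_strict_right_mono)
  qed
qed

lemma ball_subset_convex_hull_perturbed:
  fixes v w :: "'i \<Rightarrow> 'a::euclidean_space"
  assumes "finite I" "0 \<le> \<epsilon>"
    and cball: "cball x \<epsilon> \<subseteq> convex hull (v ` I)"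
    and close: "\<And>i. i \<in> I \<Longrightarrow> dist (v i) (w i) \<le> \<delta>"
  shows "ball x (\<epsilon> - \<delta>) \<subseteq> convex hull (w ` I)"
proof
  fix z assume z: "z \<in> ball x (\<epsilon> - \<delta>)"
  show "z \<in> convex hull (w ` I)"
  proof (rule ccontr)
    assume "z \<notin> convex hull (w ` I)"
    moreover have "closed (convex hull (w ` I))"
      using \<open>finite I\<close> by (simp add: compact_imp_closed finite_imp_compact_convex_hull)
    ultimately obtain u where u: "norm u = 1"
      and sep: "\<And>y. y \<in> convex hull (w ` I) \<Longrightarrow> inner u y < inner u z"
      using separating_unit_normal_closed_point by (metis convex_convex_hull)
    have "inner u (v i) < inner u z + \<delta>" if "i \<in> I" for i
    proof -
      have "inner u (v i - w i) \<le> norm u * norm (v i - w i)"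
        by (rule norm_cauchy_schwarz)
      then have "inner u (v i - w i) \<le> \<delta>"
        using u close[OF that] by (simp add: dist_norm)
      moreover have "inner u (w i) < inner u z"
        using sep that by (simp add: hull_inc)
      ultimately show ?thesis
        by (simp add: inner_diff_right)
    qed
    then have "convex hull (v ` I) \<subseteq> {y. inner u y < inner u z + \<delta>}"
      by (intro hull_minimal) (auto simp: convex_halfspace_lt)
    moreover have "x + \<epsilon> *\<^sub>R u \<in> cball x \<epsilon>"
      using u \<open>0 \<le> \<epsilon>\<close> by (simp add: dist_norm)
    ultimately have "inner u (x + \<epsilon> *\<^sub>R u) < inner u z + \<delta>"
      using cball by blast
    moreover have "inner u (x + \<epsilon> *\<^sub>R u) = inner u x + \<epsilon>"
      using u by (simp add: inner_add_right dot_square_norm)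
    moreover have "inner u (z - x) \<le> norm u * norm (z - x)"
      by (rule norm_cauchy_schwarz)
    ultimately show False
      using u z by (simp add: inner_diff_right dist_norm norm_minus_commute)
  qed
qed

lemma interior_convex_hull_perturbed:
  fixes v w :: "'i \<Rightarrow> 'a::euclidean_space"
  assumes "finite I" "0 \<le> \<epsilon>"
    and cball: "cball x \<epsilon> \<subseteq> convex hull (v ` I)"
    and close: "\<And>i. i \<in> I \<Longrightarrow> dist (v i) (w i) < \<epsilon>"
  shows "x \<in> interior (convex hull (w ` I))"
proof -
  have "I \<noteq> {}"
    using cball \<open>0 \<le> \<epsilon>\<close> by auto
  define \<delta> where "\<delta> = Max ((\<lambda>i. dist (v i) (w i)) ` I)"
  have "\<delta> < \<epsilon>"
    using \<open>finite I\<close> \<open>I \<noteq> {}\<close> close by (simp add: \<delta>_def)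
  moreover have "ball x (\<epsilon> - \<delta>) \<subseteq> convex hull (w ` I)"
    using \<open>finite I\<close> by (intro ball_subset_convex_hull_perturbed[OF _ \<open>0 \<le> \<epsilon>\<close> cball])
      (auto simp: \<delta>_def)
  ultimately show ?thesis
    by (meson diff_gt_0_iff_gt mem_interior)
qed

theorem lemma12:
  fixes v vt :: "nat \<Rightarrow> real ^ 'l" and m :: nat
    and A :: "real ^ 'l ^ 'k" and b :: "real ^ 'k"
    and At :: "real ^ 'l ^ 'r" and bt :: "real ^ 'r"
    and \<epsilon> :: real and x :: "real ^ 'l"
  assumes hullV: "interior (convex hull (v ` {..<m})) = {y. \<forall>j. (A *v y) $ j < b $ j}"
    and hullVt: "interior (convex hull (vt ` {..<m})) = {y. \<forall>j. (At *v y) $ j < bt $ j}"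
    and rowsA: "\<forall>j. norm (A $ j) = 1"
    and rowsAt: "\<forall>j. norm (At $ j) = 1"
    and eps: "\<epsilon> > 0"
    and hx: "\<forall>j. (A *v x) $ j < b $ j - \<epsilon>"
    and close: "\<forall>i<m. norm (v i - vt i) < \<epsilon>"
  shows "\<forall>j. (At *v x) $ j < bt $ j"
proof -
  have "cball x \<epsilon> \<subseteq> interior (convex hull (v ` {..<m}))"
    unfolding hullV using rowsA hx by (intro cball_subset_strict_polyhedron) auto
  then have "cball x \<epsilon> \<subseteq> convex hull (v ` {..<m})"
    using interior_subset by blast
  then have "x \<in> interior (convex hull (vt ` {..<m}))"
    using eps close by (intro interior_convex_hull_perturbed) (auto simp: dist_norm)
  then show ?thesis
    using hullVt by simp
qed

end
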